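(* Let $\chi\ge3$, let $s_1\ge s_2\ge\dots\ge s_\chi\ge0$, $\mathsf S=\mathrm{diag}(s_1,\dots,s_\chi)$, let $\mathcal N_L,\mathcal N_R$ be real numbers, $\mathbf p_R\in\mathbb C^{1\times\chi}$ a row vector and $\mathbf p_L\in\mathbb C^{\chi\times1}$ a column vector, and consider the $(\chi+2)\times(\chi+2)$ matrix $$M=\begin{pmatrix}\mathcal N_R&\mathbf p_R&0\\0&\mathsf S&\mathbf p_L\\0&0&\mathcal N_L\end{pmatrix}.$$ Denote the singular values of $M$ by $\lambda_{-1}\ge\lambda_0\ge\lambda_1\ge\dots\ge\lambda_\chi\ge0$. Then $s_a\ge\lambda_a\ge s_{a+2}$ for every $a\in\{1,\dots,\chi-2\}$. *)

theory Defs
  imports "Jordan_Normal_Form.Char_Poly" "HOL-Library.Multiset"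
begin

definition ctrans :: "complex mat \<Rightarrow> complex mat" where
  "ctrans A = mat (dim_col A) (dim_row A) (\<lambda>(i,j). cnj (A $$ (j,i)))"

definition sing_vals :: "complex mat \<Rightarrow> real list" where
  "sing_vals A = rev (sorted_list_of_multiset
      (image_mset (\<lambda>z. sqrt (Re z)) (proots (char_poly (ctrans A * A)))))"

(* the (chi+2)x(chi+2) matrix of the paper; rows/columns indexed 0..chi+1,
   s, pR, pL indexed 1..chi *)
definition Mmat :: "nat \<Rightarrow> (nat \<Rightarrow> real) \<Rightarrow> real \<Rightarrow> real \<Rightarrow> (nat \<Rightarrow> complex) \<Rightarrow> (nat \<Rightarrow> complex) \<Rightarrow> complex mat" where
  "Mmat chi s NR NL pR pL = mat (chi+2) (chi+2) (\<lambda>(i,j).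
     if i = 0 then (if j = 0 then complex_of_real NR else if j \<le> chi then pR j else 0)
     else if i \<le> chi then (if j = i then complex_of_real (s i) else if j = chi+1 then pL i else 0)
     else (if j = chi+1 then complex_of_real NL else 0))"

end

theory Submission
  imports Defs
begin

(* The singular values of M are the square roots of the eigenvalues of the Hermitian
  matrix M\<^sup>H M, whose quadratic form is \<parallel>M x\<parallel>\<^sup>2, so by the Courant--Fischer principle it
  suffices to exhibit subspaces on which this form is small or large. If x\<^bsub>\<chi>+1\<^esub> = 0, then
  M acts on the coordinates 1, \<dots>, \<chi> as the diagonal matrix S. Imposing in addition
  (M x)\<^sub>0 = 0 and x\<^sub>1 = \<dots> = x\<^bsub>a-1\<^esub> = 0, i.e. a + 1 conditions in total, gives
  \<parallel>M x\<parallel>\<^sup>2 \<le> s\<^sub>a\<^sup>2 \<parallel>x\<parallel>\<^sup>2, so at most a + 1 eigenvalues exceed s\<^sub>a\<^sup>2. On the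
  (a + 2)-dimensional space of vectors supported on {1, \<dots>, a + 2} one has
  \<parallel>M x\<parallel>\<^sup>2 \<ge> s\<^bsub>a+2\<^esub>\<^sup>2 \<parallel>x\<parallel>\<^sup>2, so at least a + 2 eigenvalues are at least
  s\<^bsub>a+2\<^esub>\<^sup>2. As \<lambda>\<^sub>a is the (a + 2)-th largest singular value (entry a + 1 of
  sing_vals), this is the claim.

  The spectral theorem behind Courant--Fischer is proved directly: the orthogonal complement of
  finitely many eigenvectors of a Hermitian matrix is invariant, and the Krylov space of any
  nonzero vector in it contains an eigenvector. *)

(* Vectors in \<complex>\<^sup>n are functions nat \<Rightarrow> complex and n \<times> n matrices are functions
  nat \<Rightarrow> nat \<Rightarrow> complex; only the values at indices below n matter. *)

definition cinner :: "nat \<Rightarrow> (nat \<Rightarrow> complex) \<Rightarrow> (nat \<Rightarrow> complex) \<Rightarrow> complex" where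
  "cinner n x y = (\<Sum>i<n. cnj (x i) * y i)"

definition sqnorm :: "nat \<Rightarrow> (nat \<Rightarrow> complex) \<Rightarrow> real" where
  "sqnorm n x = (\<Sum>i<n. (cmod (x i))\<^sup>2)"

definition mat_vec :: "nat \<Rightarrow> (nat \<Rightarrow> nat \<Rightarrow> complex) \<Rightarrow> (nat \<Rightarrow> complex) \<Rightarrow> nat \<Rightarrow> complex" where
  "mat_vec n h x i = (\<Sum>j<n. h i j * x j)"

definition hermitian :: "nat \<Rightarrow> (nat \<Rightarrow> nat \<Rightarrow> complex) \<Rightarrow> bool" where
  "hermitian n h \<longleftrightarrow> (\<forall>i<n. \<forall>j<n. h j i = cnj (h i j))"

definition is_eigvec :: "nat \<Rightarrow> (nat \<Rightarrow> nat \<Rightarrow> complex) \<Rightarrow> complex \<Rightarrow> (nat \<Rightarrow> complex) \<Rightarrow> bool" where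
  "is_eigvec n h e y \<longleftrightarrow> (\<exists>i<n. y i \<noteq> 0) \<and> (\<forall>i<n. mat_vec n h y i = e * y i)"

lemma homogeneous_system_nontrivial_solution:
  fixes G :: "(nat \<Rightarrow> 'a :: field) set"
  assumes "finite G" and "card G < N"
  shows "\<exists>x. (\<exists>i<N. x i \<noteq> 0) \<and> (\<forall>g\<in>G. (\<Sum>i<N. g i * x i) = 0)"
proof -
  obtain gs where gs: "set gs = G" "distinct gs"
    using assms(1) finite_distinct_list by blast
  then have len: "length gs < N"
    using assms(2) distinct_card by fastforce
  \<comment> \<open>The functionals in \<open>G\<close> as rows, padded with zero rows; as \<open>card G < N\<close>, the last row is zero.\<close>
  define A :: "'a mat" where "A = mat\<^sub>r N N (\<lambda>l. if l = N - 1 then 0\<^sub>v N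
    else vec N (\<lambda>i. if l < length gs then (gs ! l) i else 0))"
  have A: "A \<in> carrier_mat N N"
    unfolding A_def by auto
  have "det A = 0"
    unfolding A_def using len by (intro det_row_0) auto
  then obtain v where v: "v \<in> carrier_vec N" "v \<noteq> 0\<^sub>v N" "A *\<^sub>v v = 0\<^sub>v N"
    using det_0_iff_vec_prod_zero_field[OF A] by auto
  show ?thesis
  proof (intro exI[of _ "\<lambda>i. v $ i"] conjI ballI)
    show "\<exists>i<N. v $ i \<noteq> 0"
    proof (rule ccontr)
      assume "\<not> (\<exists>i<N. v $ i \<noteq> 0)"
      then have "v = 0\<^sub>v N"
        using v(1) by (intro eq_vecI) auto
      with v(2) show False ..
    qed
  next
    fix g assume "g \<in> G"
    then obtain l where l: "l < length gs" "g = gs ! l"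
      using gs(1) by (auto simp: in_set_conv_nth)
    have "row A l = vec N g"
      unfolding A_def using l len by auto
    then have "(A *\<^sub>v v) $ l = (\<Sum>i<N. g i * v $ i)"
      using A l len v(1) by (auto simp: scalar_prod_def lessThan_atLeast0 intro!: sum.cong)
    then show "(\<Sum>i<N. g i * v $ i) = 0"
      using v(3) l len by auto
  qed
qed

lemma cinner_commute: "cinner n y x = cnj (cinner n x y)"
  unfolding cinner_def by (simp add: ac_simps)

lemma cnj_mult_self: "cnj z * z = of_real ((cmod z)\<^sup>2)"
  by (metis complex_norm_square mult.commute)

lemma cinner_self: "cinner n x x = of_real (sqnorm n x)"
  unfolding cinner_def sqnorm_def of_real_sum by (simp only: cnj_mult_self)

lemma sqnorm_pos:
  assumes "\<exists>i<n. x i \<noteq> 0"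
  shows "0 < sqnorm n x"
proof -
  obtain i where "i < n" "x i \<noteq> 0"
    using assms by blast
  then have "0 < (cmod (x i))\<^sup>2" and "(cmod (x i))\<^sup>2 \<le> sqnorm n x"
    unfolding sqnorm_def by (auto intro: member_le_sum)
  then show ?thesis by linarith
qed

lemma cinner_cong:
  "(\<And>i. i < n \<Longrightarrow> x i = x' i) \<Longrightarrow> (\<And>i. i < n \<Longrightarrow> y i = y' i) \<Longrightarrow> cinner n x y = cinner n x' y'"
  unfolding cinner_def by (auto intro!: sum.cong)

lemma cinner_scale_left: "cinner n (\<lambda>i. c * x i) y = cnj c * cinner n x y"
  unfolding cinner_def by (simp add: sum_distrib_left mult.assoc)

lemma cinner_scale_right: "cinner n x (\<lambda>i. c * y i) = c * cinner n x y"
  unfolding cinner_def by (simp add: sum_distrib_left mult.left_commute)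

lemma cinner_sum_right: "cinner n x (\<lambda>i. \<Sum>j<N. b j * y j i) = (\<Sum>j<N. b j * cinner n x (y j))"
  unfolding cinner_def sum_distrib_left
  by (subst sum.swap) (simp add: mult.left_commute)

lemma cinner_sum_left: "cinner n (\<lambda>i. \<Sum>j<N. b j * y j i) x = (\<Sum>j<N. cnj (b j) * cinner n (y j) x)"
  by (subst (1 2) cinner_commute) (simp add: cinner_sum_right cnj_sum)

lemma mat_vec_sum: "mat_vec n h (\<lambda>i. \<Sum>j<N. b j * y j i) i = (\<Sum>j<N. b j * mat_vec n h (y j) i)"
  unfolding mat_vec_def sum_distrib_left
  by (subst sum.swap) (simp add: mult.left_commute)

lemma hermitian_cinner_mat_vec:
  assumes "hermitian n h"
  shows "cinner n x (mat_vec n h y) = cinner n (mat_vec n h x) y"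
proof -
  have "cinner n x (mat_vec n h y) = (\<Sum>i<n. \<Sum>j<n. cnj (x i) * h i j * y j)"
    unfolding cinner_def mat_vec_def by (simp add: sum_distrib_left mult.assoc)
  also have "\<dots> = (\<Sum>j<n. \<Sum>i<n. cnj (h j i * x i) * y j)"
  proof (subst sum.swap, intro sum.cong refl)
    fix i j assume "i \<in> {..<n}" "j \<in> {..<n}"
    then have "h j i = cnj (h i j)"
      using assms unfolding hermitian_def by blast
    then show "cnj (x j) * h j i * y i = cnj (h i j * x j) * y i"
      by simp
  qed
  also have "\<dots> = cinner n (mat_vec n h x) y"
    unfolding cinner_def mat_vec_def by (simp add: cnj_sum sum_distrib_right)
  finally show ?thesis .
qed

definition krylov_comb :: "nat \<Rightarrow> (nat \<Rightarrow> nat \<Rightarrow> complex) \<Rightarrow> (nat \<Rightarrow> complex) \<Rightarrow> nat \<Rightarrow> (nat \<Rightarrow> complex)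
    \<Rightarrow> nat \<Rightarrow> complex" where
  "krylov_comb n h x N b i = (\<Sum>j<N. b j * (mat_vec n h ^^ j) x i)"

lemma krylov_comb_linear_factor:
  assumes "degree q < N"
  shows "krylov_comb n h x (Suc N) (coeff ([:-r, 1:] * q)) i
    = mat_vec n h (krylov_comb n h x (Suc N) (coeff q)) i - r * krylov_comb n h x (Suc N) (coeff q) i"
proof -
  have "(\<Sum>j<Suc N. coeff (pCons 0 q) j * (mat_vec n h ^^ j) x i)
      = (\<Sum>j<N. coeff q j * (mat_vec n h ^^ Suc j) x i)"
    unfolding sum.lessThan_Suc_shift by simp
  also have "\<dots> = (\<Sum>j<Suc N. coeff q j * (mat_vec n h ^^ Suc j) x i)"
    using assms by (simp add: coeff_eq_0)
  also have "\<dots> = mat_vec n h (krylov_comb n h x (Suc N) (coeff q)) i"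
    unfolding krylov_comb_def mat_vec_sum by simp
  finally show ?thesis
    unfolding krylov_comb_def by (simp add: algebra_simps sum_subtractf sum_distrib_left)
qed

(* Split off a linear factor X - r of a polynomial q with q(H) x = 0: either
  q'(H) x is an eigenvector for r, or it vanishes and q' has smaller degree. *)
lemma krylov_eigvec:
  fixes q :: "complex poly"
  assumes x: "\<exists>i<n. x i \<noteq> 0"
  shows "q \<noteq> 0 \<Longrightarrow> degree q < N \<Longrightarrow> (\<And>i. i < n \<Longrightarrow> krylov_comb n h x N (coeff q) i = 0) \<Longrightarrow>
    \<exists>b e. is_eigvec n h e (krylov_comb n h x N b)"
proof (induction "degree q" arbitrary: q rule: less_induct)
  case less
  show ?case
  proof (cases "degree q = 0")
    case True
    then obtain c where q: "q = [:c:]"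
      by (rule degree_eq_zeroE)
    obtain i where i: "i < n" "x i \<noteq> 0"
      using x by blast
    obtain N' where N: "N = Suc N'"
      using less.prems(2) by (cases N) auto
    have "krylov_comb n h x N (coeff q) i = c * x i"
      unfolding krylov_comb_def N sum.lessThan_Suc_shift by (simp add: q)
    with less.prems(1,3) i q show ?thesis
      by auto
  next
    case False
    then have "\<not> constant (poly q)"
      by (simp add: constant_degree)
    then obtain r where "poly q r = 0"
      using fundamental_theorem_of_algebra by blast
    then obtain q' where q: "q = [:-r, 1:] * q'"
      using poly_eq_0_iff_dvd by (metis dvdE)
    then have "q' \<noteq> 0"
      using less.prems(1) by auto
    then have deg: "degree q = Suc (degree q')"
      unfolding q by (subst degree_mult_eq) auto
    then obtain N' where N: "N = Suc N'" and deg': "degree q' < N'"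
      using less.prems(2) by (cases N) auto
    define y where "y = krylov_comb n h x N (coeff q')"
    have y_eigen: "mat_vec n h y i = r * y i" if "i < n" for i
      using krylov_comb_linear_factor[OF deg', of n h x r i] less.prems(3)[OF that]
      unfolding y_def N q by simp
    show ?thesis
    proof (cases "\<exists>i<n. y i \<noteq> 0")
      case True
      with y_eigen have "is_eigvec n h r y"
        unfolding is_eigvec_def by blast
      then show ?thesis
        unfolding y_def by blast
    next
      case False
      then show ?thesis
        using less.hyps[of q'] deg deg' N \<open>q' \<noteq> 0\<close> unfolding y_def by auto
    qed
  qed
qed

(* The n + 1 vectors H\<^sup>j x, j \<le> n, are linearly dependent, which yields a polynomial
  q \<noteq> 0 with q(H) x = 0. *)
lemma krylov_space_has_eigvec:
  assumes x: "\<exists>i<n. x i \<noteq> 0"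
  shows "\<exists>b e. is_eigvec n h e (krylov_comb n h x (Suc n) b)"
proof -
  have "card ((\<lambda>i j. (mat_vec n h ^^ j) x i) ` {..<n}) < Suc n"
    using card_image_le[of "{..<n}" "\<lambda>i j. (mat_vec n h ^^ j) x i"] by simp
  then obtain a where a: "\<exists>j<Suc n. a j \<noteq> 0"
    and dep: "\<And>i. i < n \<Longrightarrow> (\<Sum>j<Suc n. (mat_vec n h ^^ j) x i * a j) = 0"
    using homogeneous_system_nontrivial_solution[of "(\<lambda>i j. (mat_vec n h ^^ j) x i) ` {..<n}" "Suc n"]
    by auto
  define q where "q = Poly (map a [0..<Suc n])"
  have coeff_q: "coeff q j = (if j < Suc n then a j else 0)" for j
    unfolding q_def by (auto simp: nth_default_def simp del: upt_Suc)
  have "q \<noteq> 0"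
    using a coeff_q by (metis coeff_0)
  moreover have "degree q < Suc n"
    using degree_le[of n q] coeff_q by auto
  moreover have "krylov_comb n h x (Suc n) (coeff q) i = 0" if "i < n" for i
    using dep[OF that] unfolding krylov_comb_def by (simp add: coeff_q mult.commute)
  ultimately show ?thesis
    using krylov_eigvec[OF x] by blast
qed

lemma hermitian_cinner_krylov_comb:
  assumes herm: "hermitian n h" and eigen: "\<And>i. i < n \<Longrightarrow> mat_vec n h v i = e * v i"
    and orth: "cinner n v x = 0"
  shows "cinner n v (krylov_comb n h x N b) = 0"
proof -
  have "cinner n v ((mat_vec n h ^^ j) x) = 0" for j
  proof (induction j)
    case (Suc j)
    have "cinner n v ((mat_vec n h ^^ Suc j) x) = cinner n (mat_vec n h v) ((mat_vec n h ^^ j) x)"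
      using hermitian_cinner_mat_vec[OF herm] by simp
    also have "\<dots> = cinner n (\<lambda>i. e * v i) ((mat_vec n h ^^ j) x)"
      using eigen by (intro cinner_cong) auto
    finally show ?case
      using Suc by (simp add: cinner_scale_left)
  qed (simp add: orth)
  then show ?thesis
    unfolding krylov_comb_def[abs_def] cinner_sum_right by simp
qed

lemma hermitian_eigvec_orthogonal:
  assumes herm: "hermitian n h" and "k < n"
    and eigen: "\<And>l i. l < k \<Longrightarrow> i < n \<Longrightarrow> mat_vec n h (v l) i = e l * v l i"
  shows "\<exists>c y. is_eigvec n h c y \<and> (\<forall>l<k. cinner n (v l) y = 0)"
proof -
  have "card ((\<lambda>l i. cnj (v l i)) ` {..<k}) < n"
    using card_image_le[of "{..<k}" "\<lambda>l i. cnj (v l i)"] \<open>k < n\<close> by simp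
  then obtain x where x: "\<exists>i<n. x i \<noteq> 0" and x_orth: "\<And>l. l < k \<Longrightarrow> cinner n (v l) x = 0"
    using homogeneous_system_nontrivial_solution[of "(\<lambda>l i. cnj (v l i)) ` {..<k}" n]
    unfolding cinner_def by auto
  obtain b c where "is_eigvec n h c (krylov_comb n h x (Suc n) b)"
    using krylov_space_has_eigvec[OF x] by blast
  moreover have "cinner n (v l) (krylov_comb n h x (Suc n) b) = 0" if "l < k" for l
    using hermitian_cinner_krylov_comb[OF herm eigen x_orth] that by blast
  ultimately show ?thesis
    by blast
qed

lemma hermitian_eigval_real:
  assumes herm: "hermitian n h" and y: "is_eigvec n h e y"
  shows "e \<in> \<real>"
proof -
  have eigen: "\<And>i. i < n \<Longrightarrow> mat_vec n h y i = e * y i"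
    using y unfolding is_eigvec_def by blast
  have "e * cinner n y y = cinner n y (mat_vec n h y)"
    using eigen by (simp add: cinner_scale_right[symmetric] cong: cinner_cong)
  also have "\<dots> = cinner n (mat_vec n h y) y"
    by (rule hermitian_cinner_mat_vec[OF herm])
  also have "\<dots> = cnj e * cinner n y y"
    using eigen by (simp add: cinner_scale_left[symmetric] cong: cinner_cong)
  finally have "e = cnj e"
    using sqnorm_pos[of n y] y unfolding cinner_self is_eigvec_def by auto
  then show ?thesis
    using Reals_cnj_iff by metis
qed

lemma hermitian_orthogonal_eigvecs:
  assumes herm: "hermitian n h"
  shows "k \<le> n \<Longrightarrow> \<exists>u d. (\<forall>l<k. is_eigvec n h (of_real (d l)) (u l))
    \<and> (\<forall>l<k. \<forall>l'<k. l \<noteq> l' \<longrightarrow> cinner n (u l) (u l') = 0)"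
proof (induction k)
  case 0
  then show ?case by simp
next
  case (Suc k)
  then obtain u d where u: "\<forall>l<k. is_eigvec n h (of_real (d l)) (u l)"
    and orth: "\<forall>l<k. \<forall>l'<k. l \<noteq> l' \<longrightarrow> cinner n (u l) (u l') = 0"
    by auto
  obtain c y where y: "is_eigvec n h c y" and y_orth: "\<forall>l<k. cinner n (u l) y = 0"
    using hermitian_eigvec_orthogonal[OF herm, of k u "\<lambda>l. of_real (d l)"] u Suc.prems
    unfolding is_eigvec_def by auto
  have "c = of_real (Re c)"
    using hermitian_eigval_real[OF herm y] by (simp add: complex_is_Real_iff)
  then have "\<forall>l<Suc k. is_eigvec n h (of_real ((d(k := Re c)) l)) ((u(k := y)) l)"
    using u y by (auto simp: less_Suc_eq)
  moreover have "\<forall>l<Suc k. \<forall>l'<Suc k. l \<noteq> l' \<longrightarrow> cinner n ((u(k := y)) l) ((u(k := y)) l') = 0"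
    using orth y_orth cinner_commute[of n y] by (auto simp: less_Suc_eq)
  ultimately show ?case
    by blast
qed

locale eigenbasis =
  fixes n :: nat and h :: "nat \<Rightarrow> nat \<Rightarrow> complex"
    and u :: "nat \<Rightarrow> nat \<Rightarrow> complex" and d :: "nat \<Rightarrow> real"
  assumes eigvec: "l < n \<Longrightarrow> is_eigvec n h (of_real (d l)) (u l)"
    and orthogonal: "l < n \<Longrightarrow> l' < n \<Longrightarrow> l \<noteq> l' \<Longrightarrow> cinner n (u l) (u l') = 0"

lemma hermitian_eigenbasis_exists:
  assumes "hermitian n h"
  shows "\<exists>u d. eigenbasis n h u d"
  using hermitian_orthogonal_eigvecs[OF assms order.refl] unfolding eigenbasis_def by blast

lemma card_lessThan_partition:
  "card {k. k < n \<and> P k} + card {k. k < n \<and> \<not> P k} = n"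
proof -
  have "card {k. k < n \<and> P k} + card {k. k < n \<and> \<not> P k}
      = card ({k. k < n \<and> P k} \<union> {k. k < n \<and> \<not> P k})"
    by (rule card_Un_disjoint[symmetric]) auto
  also have "{k. k < n \<and> P k} \<union> {k. k < n \<and> \<not> P k} = {..<n}"
    by auto
  finally show ?thesis
    by simp
qed

lemma sum_unit_mult:
  fixes n :: nat
  assumes "p < n"
  shows "(\<Sum>i<n. (if i = p then 1 else 0) * x i) = (x p :: 'a :: semiring_1)"
proof -
  have "(\<Sum>i<n. (if i = p then 1 else 0) * x i) = (\<Sum>i<n. if i = p then x p else 0)"
    by (intro sum.cong) auto
  also have "\<dots> = x p"
    using assms by (subst sum.delta) auto
  finally show ?thesis .
qed

context eigenbasis
begin

lemma eigvec_eq: "l < n \<Longrightarrow> i < n \<Longrightarrow> mat_vec n h (u l) i = of_real (d l) * u l i"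
  using eigvec unfolding is_eigvec_def by blast

lemma eigvec_sqnorm_pos: "l < n \<Longrightarrow> 0 < sqnorm n (u l)"
  using eigvec sqnorm_pos unfolding is_eigvec_def by blast

lemma cinner_expansion:
  "cinner n (\<lambda>i. \<Sum>k<n. a k * u k i) (\<lambda>i. \<Sum>k<n. b k * u k i)
     = (\<Sum>k<n. cnj (a k) * b k * of_real (sqnorm n (u k)))"
proof -
  have "(\<Sum>l<n. b l * cinner n (u k) (u l)) = b k * of_real (sqnorm n (u k))" if "k < n" for k
  proof -
    have "(\<Sum>l<n. b l * cinner n (u k) (u l)) = (\<Sum>l<n. if l = k then b k * cinner n (u k) (u k) else 0)"
      using orthogonal that by (intro sum.cong) auto
    then show ?thesis
      using that by (simp add: cinner_self)
  qed
  then show ?thesis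
    unfolding cinner_sum_left cinner_sum_right by (simp add: mult.assoc)
qed

lemma sqnorm_expansion:
  "sqnorm n (\<lambda>i. \<Sum>k<n. c k * u k i) = (\<Sum>k<n. (cmod (c k))\<^sup>2 * sqnorm n (u k))"
proof -
  have "complex_of_real (sqnorm n (\<lambda>i. \<Sum>k<n. c k * u k i))
      = of_real (\<Sum>k<n. (cmod (c k))\<^sup>2 * sqnorm n (u k))"
    unfolding cinner_self[symmetric] cinner_expansion of_real_sum of_real_mult cnj_mult_self ..
  then show ?thesis
    using of_real_eq_iff by blast
qed

lemma form_expansion:
  "Re (cinner n (\<lambda>i. \<Sum>k<n. c k * u k i) (mat_vec n h (\<lambda>i. \<Sum>k<n. c k * u k i)))
     = (\<Sum>k<n. d k * ((cmod (c k))\<^sup>2 * sqnorm n (u k)))"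
proof -
  have "mat_vec n h (\<lambda>i. \<Sum>k<n. c k * u k i) i = (\<Sum>k<n. (c k * of_real (d k)) * u k i)" if "i < n" for i
    unfolding mat_vec_sum using eigvec_eq that by (simp add: mult.assoc)
  then have "cinner n (\<lambda>i. \<Sum>k<n. c k * u k i) (mat_vec n h (\<lambda>i. \<Sum>k<n. c k * u k i))
      = (\<Sum>k<n. cnj (c k) * (c k * of_real (d k)) * of_real (sqnorm n (u k)))"
    unfolding cinner_expansion[symmetric] by (intro cinner_cong) auto
  also have "\<dots> = of_real (\<Sum>k<n. d k * ((cmod (c k))\<^sup>2 * sqnorm n (u k)))"
    unfolding of_real_sum of_real_mult cnj_mult_self[symmetric] by (simp add: mult_ac)
  finally show ?thesis
    by simp
qed

lemma orthogonal_combination_exists: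
  assumes "finite G" and "K \<subseteq> {..<n}" and "card G + card K < n"
  shows "\<exists>c. (\<exists>k<n. c k \<noteq> 0) \<and> (\<forall>k\<in>K. c k = 0)
    \<and> (\<forall>w\<in>G. cinner n w (\<lambda>i. \<Sum>k<n. c k * u k i) = 0)"
proof -
  define F where "F = (\<lambda>w k. cinner n w (u k)) ` G \<union> (\<lambda>k' k. if k = k' then 1 else 0) ` K"
  have "finite K"
    using assms(2) finite_subset by blast
  then have "card F \<le> card G + card K"
    unfolding F_def using \<open>finite G\<close>
    by (intro card_Un_le[THEN order.trans] add_mono card_image_le)
  moreover have "finite F"
    unfolding F_def using \<open>finite G\<close> \<open>finite K\<close> by simp
  ultimately obtain c where c: "\<exists>k<n. c k \<noteq> 0" and c_F: "\<And>f. f \<in> F \<Longrightarrow> (\<Sum>k<n. f k * c k) = 0"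
    using homogeneous_system_nontrivial_solution[of F n] assms(3) by force
  have "c k = 0" if "k \<in> K" for k
    using c_F[of "\<lambda>k'. if k' = k then 1 else 0"] that assms(2) sum_unit_mult[of k n c]
    unfolding F_def by auto
  moreover have "cinner n w (\<lambda>i. \<Sum>k<n. c k * u k i) = 0" if "w \<in> G" for w
    using c_F[of "\<lambda>k. cinner n w (u k)"] that
    unfolding F_def cinner_sum_right by (simp add: mult.commute)
  ultimately show ?thesis
    using c by blast
qed

lemma form_minus_expansion:
  "Re (cinner n (\<lambda>i. \<Sum>k<n. c k * u k i) (mat_vec n h (\<lambda>i. \<Sum>k<n. c k * u k i)))
     - t * sqnorm n (\<lambda>i. \<Sum>k<n. c k * u k i)
   = (\<Sum>k<n. (d k - t) * ((cmod (c k))\<^sup>2 * sqnorm n (u k)))"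
  unfolding form_expansion sqnorm_expansion sum_distrib_left sum_subtractf[symmetric]
  by (simp add: left_diff_distrib)

lemma weighted_sum_pos:
  assumes "\<exists>k<n. c k \<noteq> 0" and "\<And>k. k < n \<Longrightarrow> c k \<noteq> 0 \<Longrightarrow> 0 < f k"
  shows "0 < (\<Sum>k<n. f k * ((cmod (c k))\<^sup>2 * sqnorm n (u k)))"
proof -
  have "0 < f k * ((cmod (c k))\<^sup>2 * sqnorm n (u k))" if "k < n" "c k \<noteq> 0" for k
    using assms(2)[OF that] eigvec_sqnorm_pos[OF that(1)] that(2) by simp
  moreover have "0 \<le> f k * ((cmod (c k))\<^sup>2 * sqnorm n (u k))" if "k < n" for k
    using calculation[OF that] by (cases "c k = 0") auto
  moreover obtain k where "k < n" "c k \<noteq> 0"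
    using assms(1) by blast
  ultimately show ?thesis
    by (intro sum_pos2[of "{..<n}" k]) auto
qed

(* Courant--Fischer: if more than card G eigenvalues were below (above) t, a nonzero
  combination of their eigenvectors would be orthogonal to G, and on it the form is below
  (above) t. *)
lemma card_eigvals_less_le:
  assumes "finite G"
    and form_ge: "\<And>x. (\<And>w. w \<in> G \<Longrightarrow> cinner n w x = 0) \<Longrightarrow> t * sqnorm n x \<le> Re (cinner n x (mat_vec n h x))"
  shows "card {k. k < n \<and> d k < t} \<le> card G"
proof (rule ccontr)
  define K where "K = {k. k < n \<and> t \<le> d k}"
  assume "\<not> ?thesis"
  with card_lessThan_partition[of n "\<lambda>k. d k < t"] have "card G + card K < n"
    unfolding K_def by (simp add: not_less)
  then obtain c where c: "\<exists>k<n. c k \<noteq> 0" and c_K: "\<forall>k\<in>K. c k = 0"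
    and orth: "\<forall>w\<in>G. cinner n w (\<lambda>i. \<Sum>k<n. c k * u k i) = 0"
    using orthogonal_combination_exists[OF \<open>finite G\<close>, of K] unfolding K_def by auto
  have "d k < t" if "k < n" "c k \<noteq> 0" for k
    using c_K that unfolding K_def by (metis mem_Collect_eq not_le)
  then have "0 < (\<Sum>k<n. (t - d k) * ((cmod (c k))\<^sup>2 * sqnorm n (u k)))"
    using c by (intro weighted_sum_pos) auto
  moreover have "t * sqnorm n (\<lambda>i. \<Sum>k<n. c k * u k i)
      \<le> Re (cinner n (\<lambda>i. \<Sum>k<n. c k * u k i) (mat_vec n h (\<lambda>i. \<Sum>k<n. c k * u k i)))"
    using orth by (intro form_ge) blast
  moreover have "(\<Sum>k<n. (d k - t) * ((cmod (c k))\<^sup>2 * sqnorm n (u k)))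
      = - (\<Sum>k<n. (t - d k) * ((cmod (c k))\<^sup>2 * sqnorm n (u k)))"
    by (simp add: sum_negf[symmetric] left_diff_distrib)
  ultimately show False
    using form_minus_expansion[of c t] by simp
qed

lemma card_eigvals_greater_le:
  assumes "finite G"
    and form_le: "\<And>x. (\<And>w. w \<in> G \<Longrightarrow> cinner n w x = 0) \<Longrightarrow> Re (cinner n x (mat_vec n h x)) \<le> t * sqnorm n x"
  shows "card {k. k < n \<and> t < d k} \<le> card G"
proof (rule ccontr)
  define K where "K = {k. k < n \<and> d k \<le> t}"
  assume "\<not> ?thesis"
  with card_lessThan_partition[of n "\<lambda>k. t < d k"] have "card G + card K < n"
    unfolding K_def by (simp add: not_less)
  then obtain c where c: "\<exists>k<n. c k \<noteq> 0" and c_K: "\<forall>k\<in>K. c k = 0"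
    and orth: "\<forall>w\<in>G. cinner n w (\<lambda>i. \<Sum>k<n. c k * u k i) = 0"
    using orthogonal_combination_exists[OF \<open>finite G\<close>, of K] unfolding K_def by auto
  have "t < d k" if "k < n" "c k \<noteq> 0" for k
    using c_K that unfolding K_def by (metis mem_Collect_eq not_le)
  then have "0 < (\<Sum>k<n. (d k - t) * ((cmod (c k))\<^sup>2 * sqnorm n (u k)))"
    using c by (intro weighted_sum_pos) auto
  moreover have "Re (cinner n (\<lambda>i. \<Sum>k<n. c k * u k i) (mat_vec n h (\<lambda>i. \<Sum>k<n. c k * u k i)))
      \<le> t * sqnorm n (\<lambda>i. \<Sum>k<n. c k * u k i)"
    using orth by (intro form_le) blast
  ultimately show False
    using form_minus_expansion[of c t] by simp
qed

lemma eigvec_mat_left_inverse: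
  "mat n n (\<lambda>(k, i). cnj (u k i) / of_real (sqnorm n (u k))) * mat n n (\<lambda>(i, k). u k i) = 1\<^sub>m n"
proof (rule eq_matI)
  fix k l assume "k < dim_row (1\<^sub>m n)" "l < dim_col (1\<^sub>m n)"
  then have kl: "k < n" "l < n" by auto
  have "(mat n n (\<lambda>(k, i). cnj (u k i) / of_real (sqnorm n (u k))) * mat n n (\<lambda>(i, k). u k i)) $$ (k, l)
      = cinner n (u k) (u l) / of_real (sqnorm n (u k))"
    using kl unfolding cinner_def
    by (auto simp: scalar_prod_def lessThan_atLeast0 sum_divide_distrib intro!: sum.cong)
  also have "\<dots> = 1\<^sub>m n $$ (k, l)"
    using kl orthogonal eigvec_sqnorm_pos[of k] by (auto simp: cinner_self)
  finally show "(mat n n (\<lambda>(k, i). cnj (u k i) / of_real (sqnorm n (u k))) * mat n n (\<lambda>(i, k). u k i)) $$ (k, l)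
      = 1\<^sub>m n $$ (k, l)" .
qed auto

lemma char_poly_eq:
  "char_poly (mat n n (\<lambda>(i, j). h i j)) = (\<Prod>a\<leftarrow>map (\<lambda>i. complex_of_real (d i)) [0..<n]. [:- a, 1:])"
proof -
  define H where "H = mat n n (\<lambda>(i, j). h i j)"
  define U where "U = mat n n (\<lambda>(i, k). u k i)"
  define Q where "Q = mat n n (\<lambda>(k, i). cnj (u k i) / of_real (sqnorm n (u k)))"
  define D where "D = mat_diag n (\<lambda>i. complex_of_real (d i))"
  have H: "H \<in> carrier_mat n n" and U: "U \<in> carrier_mat n n" and Q: "Q \<in> carrier_mat n n"
    and D: "D \<in> carrier_mat n n"
    unfolding H_def U_def Q_def D_def by auto
  have QU: "Q * U = 1\<^sub>m n"
    unfolding Q_def U_def by (rule eigvec_mat_left_inverse)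
  then have UQ: "U * Q = 1\<^sub>m n"
    by (rule mat_mult_left_right_inverse[OF Q U])
  have "H * U = U * D"
  proof (rule eq_matI)
    fix i k assume "i < dim_row (U * D)" "k < dim_col (U * D)"
    then have ik: "i < n" "k < n"
      using U D by auto
    have "(H * U) $$ (i, k) = mat_vec n h (u k) i"
      using ik unfolding H_def U_def mat_vec_def
      by (auto simp: scalar_prod_def lessThan_atLeast0 intro!: sum.cong)
    also have "\<dots> = (U * D) $$ (i, k)"
      using ik eigvec_eq[of k i] unfolding U_def D_def by (simp add: mat_diag_mult_right[of _ n n])
    finally show "(H * U) $$ (i, k) = (U * D) $$ (i, k)" .
  qed (use H U D in auto)
  then have "similar_mat_wit H D U Q"
    using H U D Q UQ by (intro similar_mat_witI[OF UQ QU _ H D U Q]) (metis assoc_mult_mat right_mult_one_mat)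
  then have "char_poly H = char_poly D"
    by (intro char_poly_similar) (auto simp: similar_mat_def)
  also have "\<dots> = (\<Prod>a\<leftarrow>diag_mat D. [:- a, 1:])"
    by (rule char_poly_upper_triangular[OF D]) (auto simp: upper_triangular_def D_def mat_diag_def)
  also have "diag_mat D = map (\<lambda>i. complex_of_real (d i)) [0..<n]"
    unfolding diag_mat_def D_def mat_diag_def by auto
  finally show ?thesis
    unfolding H_def .
qed

end

definition gram :: "complex mat \<Rightarrow> nat \<Rightarrow> nat \<Rightarrow> complex" where
  "gram A = (\<lambda>i j. (ctrans A * A) $$ (i, j))"

lemma gram_eq:
  assumes "A \<in> carrier_mat n n" and "i < n" and "j < n"
  shows "gram A i j = (\<Sum>r<n. cnj (A $$ (r, i)) * A $$ (r, j))"
  using assms by (auto simp: gram_def ctrans_def scalar_prod_def lessThan_atLeast0 intro!: sum.cong)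

lemma hermitian_gram: "A \<in> carrier_mat n n \<Longrightarrow> hermitian n (gram A)"
  unfolding hermitian_def by (auto simp: gram_eq cnj_sum mult.commute intro!: sum.cong)

lemma cinner_gram:
  assumes A: "A \<in> carrier_mat n n"
  shows "cinner n x (mat_vec n (gram A) x) = of_real (sqnorm n (mat_vec n (\<lambda>i j. A $$ (i, j)) x))"
proof -
  let ?F = "\<lambda>i j r. cnj (A $$ (r, i) * x i) * (A $$ (r, j) * x j)"
  have "cinner n x (mat_vec n (gram A) x) = (\<Sum>i<n. \<Sum>j<n. \<Sum>r<n. ?F i j r)"
    unfolding cinner_def mat_vec_def using A
    by (auto simp: gram_eq sum_distrib_left sum_distrib_right mult_ac intro!: sum.cong)
  also have "\<dots> = (\<Sum>r<n. \<Sum>i<n. \<Sum>j<n. ?F i j r)"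
    by (subst sum.swap, subst (2) sum.swap) (rule refl)
  also have "\<dots> = cinner n (mat_vec n (\<lambda>i j. A $$ (i, j)) x) (mat_vec n (\<lambda>i j. A $$ (i, j)) x)"
    unfolding cinner_def mat_vec_def cnj_sum sum_product ..
  finally show ?thesis
    unfolding cinner_self .
qed

lemma proots_linear_factors: "proots (\<Prod>a\<leftarrow>xs. [:- a, 1:]) = mset (xs :: 'a :: idom list)"
proof (induction xs)
  case (Cons a xs)
  have "(\<Prod>a\<leftarrow>xs. [:- a, 1:]) \<noteq> 0"
    by (auto simp: prod_list_zero_iff)
  then have "proots (\<Prod>a\<leftarrow>a # xs. [:- a, 1:]) = proots [:- a, 1:] + proots (\<Prod>a\<leftarrow>xs. [:- a, 1:])"
    unfolding list.map prod_list.Cons by (rule proots_mult[rotated]) simp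
  with Cons show ?case
    by simp
qed simp

lemma sing_vals_eigenbasis:
  assumes "A \<in> carrier_mat n n" and "eigenbasis n (gram A) u d"
  shows "sing_vals A = rev (sort (map (\<lambda>k. sqrt (d k)) [0..<n]))"
proof -
  have "mat n n (\<lambda>(i, j). gram A i j) = ctrans A * A"
    using assms(1) by (intro eq_matI) (auto simp: gram_def ctrans_def)
  then have char_poly_gram:
    "char_poly (ctrans A * A) = (\<Prod>a\<leftarrow>map (\<lambda>i. complex_of_real (d i)) [0..<n]. [:- a, 1:])"
    using eigenbasis.char_poly_eq[OF assms(2)] by (simp only:)
  show ?thesis
    unfolding sing_vals_def char_poly_gram proots_linear_factors
    unfolding mset_map[symmetric] sorted_list_of_multiset_mset map_map
    by (simp add: o_def)
qed

lemma sorted_nth_upward_closed_iff: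
  assumes sorted: "sorted zs" and j: "j < length zs" and up: "\<And>x y. x \<le> y \<Longrightarrow> P x \<Longrightarrow> P y"
  shows "P (zs ! j) \<longleftrightarrow> length zs - j \<le> length (filter P zs)"
proof -
  define S where "S = {l. l < length zs \<and> P (zs ! l)}"
  have count: "length (filter P zs) = card S"
    unfolding S_def length_filter_conv_card ..
  show ?thesis
  proof
    assume P_j: "P (zs ! j)"
    have "P (zs ! l)" if "j \<le> l" "l < length zs" for l
      using up[OF sorted_nth_mono[OF sorted that] P_j] .
    then have "{j..<length zs} \<subseteq> S"
      unfolding S_def by (auto simp: subset_iff)
    then have "card {j..<length zs} \<le> card S"
      by (rule card_mono[rotated]) (simp add: S_def)
    then show "length zs - j \<le> length (filter P zs)"
      unfolding count by simp
  next
    assume count_ge: "length zs - j \<le> length (filter P zs)"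
    show "P (zs ! j)"
    proof (rule ccontr)
      assume not_P_j: "\<not> P (zs ! j)"
      have "\<not> P (zs ! l)" if "l \<le> j" for l
        using up[OF sorted_nth_mono[OF sorted that j]] not_P_j by blast
      then have "S \<subseteq> {Suc j..<length zs}"
        unfolding S_def by (auto simp: subset_iff Suc_le_eq not_le[symmetric])
      then have "card S \<le> card {Suc j..<length zs}"
        by (rule card_mono[rotated]) simp
      then show False
        using count_ge j unfolding count by simp
    qed
  qed
qed

lemma rev_sort_nth_upward_closed:
  fixes ys :: "'a :: linorder list"
  assumes i: "i < length ys" and up: "\<And>x y. x \<le> y \<Longrightarrow> P x \<Longrightarrow> P y"
  shows "P (rev (sort ys) ! i) \<longleftrightarrow> i < length (filter P ys)"
proof -
  have "rev (sort ys) ! i = sort ys ! (length ys - Suc i)"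
    using i by (simp add: rev_nth)
  moreover have "length (filter P (sort ys)) = length (filter P ys)"
    by (simp add: filter_sort)
  ultimately show ?thesis
    using sorted_nth_upward_closed_iff[of "sort ys" "length ys - Suc i" P] i up by auto
qed

lemma antimono_on_interval_Suc:
  fixes f :: "nat \<Rightarrow> 'a :: order"
  assumes Suc_le: "\<And>k. m \<le> k \<Longrightarrow> k < n \<Longrightarrow> f (Suc k) \<le> f k"
    and "m \<le> i" and "i \<le> j" and "j \<le> n"
  shows "f j \<le> f i"
  using \<open>i \<le> j\<close> \<open>j \<le> n\<close>
proof (induction j rule: dec_induct)
  case (step k)
  then show ?case
    using assms(2) Suc_le[of k] by (auto intro: order.trans)
qed simp

lemma sqrt_less_iff_sq_less: "0 \<le> c \<Longrightarrow> c < sqrt y \<longleftrightarrow> c\<^sup>2 < y"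
  by (metis abs_of_nonneg real_sqrt_abs real_sqrt_less_iff)

lemma sqrt_le_iff_sq_le: "0 \<le> c \<Longrightarrow> c \<le> sqrt y \<longleftrightarrow> c\<^sup>2 \<le> y"
  by (metis abs_of_nonneg real_sqrt_abs real_sqrt_le_iff)

lemma length_filter_map_upt: "length (filter P (map f [0..<n])) = card {k. k < n \<and> P (f k)}"
  unfolding length_filter_conv_card by (rule arg_cong[where f = card]) auto

lemma rev_sort_sqrt_nth_le:
  fixes d :: "nat \<Rightarrow> real"
  assumes "i < n" and "0 \<le> c" and "card {k. k < n \<and> c\<^sup>2 < d k} \<le> i"
  shows "rev (sort (map (\<lambda>k. sqrt (d k)) [0..<n])) ! i \<le> c"
  using rev_sort_nth_upward_closed[of i "map (\<lambda>k. sqrt (d k)) [0..<n]" "\<lambda>y. c < y",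
      unfolded length_filter_map_upt] assms
  by (simp add: sqrt_less_iff_sq_less)

lemma rev_sort_sqrt_nth_ge:
  fixes d :: "nat \<Rightarrow> real"
  assumes "i < n" and "0 \<le> c" and "card {k. k < n \<and> d k < c\<^sup>2} + i < n"
  shows "c \<le> rev (sort (map (\<lambda>k. sqrt (d k)) [0..<n])) ! i"
proof -
  have "i < card {k. k < n \<and> c\<^sup>2 \<le> d k}"
    using card_lessThan_partition[of n "\<lambda>k. d k < c\<^sup>2"] assms(3) by (simp add: not_less)
  then show ?thesis
    using rev_sort_nth_upward_closed[of i "map (\<lambda>k. sqrt (d k)) [0..<n]" "\<lambda>y. c \<le> y",
        unfolded length_filter_map_upt] assms(1,2)
    by (simp add: sqrt_le_iff_sq_le)
qed

lemma cmod_of_real_mult_sq: "(cmod (of_real c * z))\<^sup>2 = c\<^sup>2 * (cmod z)\<^sup>2"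
  by (simp add: norm_mult power_mult_distrib)

lemma Mmat_carrier: "Mmat chi s NR NL pR pL \<in> carrier_mat (chi + 2) (chi + 2)"
  unfolding Mmat_def by simp

lemma Mmat_mat_vec_middle:
  assumes "x (chi + 1) = 0" and "1 \<le> r" and "r \<le> chi"
  shows "mat_vec (chi + 2) (\<lambda>i j. Mmat chi s NR NL pR pL $$ (i, j)) x r = s r * x r"
proof -
  have "mat_vec (chi + 2) (\<lambda>i j. Mmat chi s NR NL pR pL $$ (i, j)) x r
      = (\<Sum>j<chi + 2. if j = r then s r * x j else 0)"
    unfolding mat_vec_def Mmat_def using assms by (intro sum.cong) auto
  also have "\<dots> = s r * x r"
    using assms by (subst sum.delta) auto
  finally show ?thesis .
qed

lemma Mmat_mat_vec_last:
  assumes "x (chi + 1) = 0"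
  shows "mat_vec (chi + 2) (\<lambda>i j. Mmat chi s NR NL pR pL $$ (i, j)) x (chi + 1) = 0"
  unfolding mat_vec_def Mmat_def using assms by (intro sum.neutral) auto

lemma cinner_unit:
  assumes "p < n"
  shows "cinner n (\<lambda>i. if i = p then 1 else 0) x = x p"
proof -
  have "cinner n (\<lambda>i. if i = p then 1 else 0) x = (\<Sum>i<n. (if i = p then 1 else 0) * x i)"
    unfolding cinner_def by (intro sum.cong) auto
  then show ?thesis
    using sum_unit_mult[OF assms] by simp
qed

lemma Mmat_form_upper:
  assumes "a \<le> chi" and s_le: "\<And>r. a \<le> r \<Longrightarrow> r \<le> chi \<Longrightarrow> (s r)\<^sup>2 \<le> (s a)\<^sup>2"
    and row_0: "mat_vec (chi + 2) (\<lambda>i j. Mmat chi s NR NL pR pL $$ (i, j)) x 0 = 0"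
    and x_low: "\<And>p. 1 \<le> p \<Longrightarrow> p < a \<Longrightarrow> x p = 0" and x_last: "x (chi + 1) = 0"
  shows "Re (cinner (chi + 2) x (mat_vec (chi + 2) (gram (Mmat chi s NR NL pR pL)) x))
    \<le> (s a)\<^sup>2 * sqnorm (chi + 2) x"
proof -
  define Mx where "Mx = mat_vec (chi + 2) (\<lambda>i j. Mmat chi s NR NL pR pL $$ (i, j)) x"
  have "(cmod (Mx r))\<^sup>2 \<le> (s a)\<^sup>2 * (cmod (x r))\<^sup>2" if "r < chi + 2" for r
  proof (cases "r = 0 \<or> r = chi + 1")
    case True
    then show ?thesis
      using row_0 Mmat_mat_vec_last[of x, OF x_last] unfolding Mx_def by auto
  next
    case False
    then have r: "1 \<le> r" "r \<le> chi"
      using that by auto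
    then have "Mx r = s r * x r"
      using Mmat_mat_vec_middle[of x, OF x_last] unfolding Mx_def by simp
    then show ?thesis
      using x_low[of r] s_le[of r] r by (cases "r < a") (simp_all add: cmod_of_real_mult_sq mult_right_mono)
  qed
  then show ?thesis
    unfolding cinner_gram[OF Mmat_carrier] Re_complex_of_real sqnorm_def sum_distrib_left
      Mx_def[symmetric]
    by (intro sum_mono) simp
qed

lemma Mmat_form_lower:
  assumes "b \<le> chi" and s_ge: "\<And>r. 1 \<le> r \<Longrightarrow> r \<le> b \<Longrightarrow> (s b)\<^sup>2 \<le> (s r)\<^sup>2"
    and x_0: "x 0 = 0" and x_high: "\<And>p. b < p \<Longrightarrow> p \<le> chi + 1 \<Longrightarrow> x p = 0"
  shows "(s b)\<^sup>2 * sqnorm (chi + 2) x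
    \<le> Re (cinner (chi + 2) x (mat_vec (chi + 2) (gram (Mmat chi s NR NL pR pL)) x))"
proof -
  define Mx where "Mx = mat_vec (chi + 2) (\<lambda>i j. Mmat chi s NR NL pR pL $$ (i, j)) x"
  have x_last: "x (chi + 1) = 0"
    using \<open>b \<le> chi\<close> by (intro x_high) auto
  have "(s b)\<^sup>2 * (cmod (x r))\<^sup>2 \<le> (cmod (Mx r))\<^sup>2" if "r < chi + 2" for r
  proof (cases "r = 0 \<or> b < r")
    case True
    then show ?thesis
      using x_0 x_high that by auto
  next
    case False
    then have r: "1 \<le> r" "r \<le> b"
      by auto
    then have "Mx r = s r * x r"
      using Mmat_mat_vec_middle[of x, OF x_last] \<open>b \<le> chi\<close> unfolding Mx_def by simp
    then show ?thesis
      using s_ge[OF r] by (simp add: cmod_of_real_mult_sq mult_right_mono)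
  qed
  then show ?thesis
    unfolding cinner_gram[OF Mmat_carrier] Re_complex_of_real sqnorm_def sum_distrib_left
      Mx_def[symmetric]
    by (intro sum_mono) simp
qed

lemma Mmat_card_eigvals_greater:
  assumes "eigenbasis (chi + 2) (gram (Mmat chi s NR NL pR pL)) u d"
    and "1 \<le> a" and "a \<le> chi" and "\<And>r. a \<le> r \<Longrightarrow> r \<le> chi \<Longrightarrow> (s r)\<^sup>2 \<le> (s a)\<^sup>2"
  shows "card {k. k < chi + 2 \<and> (s a)\<^sup>2 < d k} \<le> a + 1"
proof -
  define e :: "nat \<Rightarrow> nat \<Rightarrow> complex" where "e p i = (if i = p then 1 else 0)" for p i
  define G where "G = insert (\<lambda>j. cnj (Mmat chi s NR NL pR pL $$ (0, j))) (e ` ({1..<a} \<union> {chi + 1}))"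
  have "card G \<le> Suc (card (e ` ({1..<a} \<union> {chi + 1})))"
    unfolding G_def by (rule card_insert_le_m1) simp_all
  also have "\<dots> \<le> Suc (card ({1..<a} \<union> {chi + 1}))"
    using card_image_le[of "{1..<a} \<union> {chi + 1}" e] by simp
  also have "\<dots> \<le> a + 1"
    using card_Un_le[of "{1..<a}" "{chi + 1}"] \<open>1 \<le> a\<close> by simp
  finally have card_G: "card G \<le> a + 1" .
  have "card {k. k < chi + 2 \<and> (s a)\<^sup>2 < d k} \<le> card G"
  proof (rule eigenbasis.card_eigvals_greater_le[OF assms(1)])
    show "finite G"
      unfolding G_def by simp
    fix x assume orth: "\<And>w. w \<in> G \<Longrightarrow> cinner (chi + 2) w x = 0"
    have x_e: "x p = 0" if "p \<in> {1..<a} \<union> {chi + 1}" for p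
    proof -
      have "e p \<in> G"
        unfolding G_def using that by blast
      then show ?thesis
        using orth cinner_unit[of p "chi + 2" x] that \<open>a \<le> chi\<close> unfolding e_def by fastforce
    qed
    have "cinner (chi + 2) (\<lambda>j. cnj (Mmat chi s NR NL pR pL $$ (0, j))) x = 0"
      by (rule orth) (simp add: G_def)
    then have "mat_vec (chi + 2) (\<lambda>i j. Mmat chi s NR NL pR pL $$ (i, j)) x 0 = 0"
      unfolding cinner_def mat_vec_def complex_cnj_cnj .
    then show "Re (cinner (chi + 2) x (mat_vec (chi + 2) (gram (Mmat chi s NR NL pR pL)) x))
        \<le> (s a)\<^sup>2 * sqnorm (chi + 2) x"
      using x_e assms(3,4) by (intro Mmat_form_upper) auto
  qed
  with card_G show ?thesis
    by simp
qed

lemma Mmat_card_eigvals_less: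
  assumes "eigenbasis (chi + 2) (gram (Mmat chi s NR NL pR pL)) u d"
    and "1 \<le> b" and "b \<le> chi" and "\<And>r. 1 \<le> r \<Longrightarrow> r \<le> b \<Longrightarrow> (s b)\<^sup>2 \<le> (s r)\<^sup>2"
  shows "card {k. k < chi + 2 \<and> d k < (s b)\<^sup>2} \<le> chi + 2 - b"
proof -
  define e :: "nat \<Rightarrow> nat \<Rightarrow> complex" where "e p i = (if i = p then 1 else 0)" for p i
  define G where "G = e ` insert 0 {b + 1..chi + 1}"
  have card_G: "card G \<le> chi + 2 - b"
    unfolding G_def using card_image_le[of "insert 0 {b + 1..chi + 1}" e] \<open>1 \<le> b\<close> \<open>b \<le> chi\<close>
    by simp
  have "card {k. k < chi + 2 \<and> d k < (s b)\<^sup>2} \<le> card G"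
  proof (rule eigenbasis.card_eigvals_less_le[OF assms(1)])
    show "finite G"
      unfolding G_def by simp
    fix x assume orth: "\<And>w. w \<in> G \<Longrightarrow> cinner (chi + 2) w x = 0"
    have x_e: "x p = 0" if "p \<in> insert 0 {b + 1..chi + 1}" for p
    proof -
      have "e p \<in> G"
        unfolding G_def using that by blast
      then show ?thesis
        using orth cinner_unit[of p "chi + 2" x] that unfolding e_def by fastforce
    qed
    then show "(s b)\<^sup>2 * sqnorm (chi + 2) x
        \<le> Re (cinner (chi + 2) x (mat_vec (chi + 2) (gram (Mmat chi s NR NL pR pL)) x))"
      using assms(3,4) by (intro Mmat_form_lower) auto
  qed
  with card_G show ?thesis
    by simp
qed

theorem mainTheorem5:
  fixes chi :: nat and s :: "nat \<Rightarrow> real" and NR NL :: real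
    and pR pL :: "nat \<Rightarrow> complex"
  assumes "chi \<ge> 3"
    and "\<And>a. 1 \<le> a \<Longrightarrow> a < chi \<Longrightarrow> s a \<ge> s (a+1)"
    and "s chi \<ge> 0"
  shows "\<forall>a\<in>{1..chi-2}. s a \<ge> sing_vals (Mmat chi s NR NL pR pL) ! (a+1)
           \<and> sing_vals (Mmat chi s NR NL pR pL) ! (a+1) \<ge> s (a+2)"
proof (intro ballI conjI)
  fix a assume a: "a \<in> {1..chi-2}"
  have s_anti: "s j \<le> s i" if "1 \<le> i" "i \<le> j" "j \<le> chi" for i j
    using antimono_on_interval_Suc[of 1 chi s] assms(2) that by simp
  have s_nonneg: "0 \<le> s j" if "1 \<le> j" "j \<le> chi" for j
    using s_anti[of j chi] assms(3) that by simp
  obtain u d where eb: "eigenbasis (chi + 2) (gram (Mmat chi s NR NL pR pL)) u d"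
    using hermitian_eigenbasis_exists[OF hermitian_gram[OF Mmat_carrier]] by blast
  have sv: "sing_vals (Mmat chi s NR NL pR pL) = rev (sort (map (\<lambda>k. sqrt (d k)) [0..<chi + 2]))"
    by (rule sing_vals_eigenbasis[OF Mmat_carrier eb])
  have "card {k. k < chi + 2 \<and> (s a)\<^sup>2 < d k} \<le> a + 1"
    using a s_anti s_nonneg by (intro Mmat_card_eigvals_greater[OF eb]) (auto intro: power_mono)
  then show "sing_vals (Mmat chi s NR NL pR pL) ! (a + 1) \<le> s a"
    unfolding sv using a s_nonneg by (intro rev_sort_sqrt_nth_le) auto
  have "card {k. k < chi + 2 \<and> d k < (s (a + 2))\<^sup>2} \<le> chi - a"
    using Mmat_card_eigvals_less[OF eb, of "a + 2"] a s_anti s_nonneg by (auto intro: power_mono)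
  then show "s (a + 2) \<le> sing_vals (Mmat chi s NR NL pR pL) ! (a + 1)"
    unfolding sv using a s_nonneg by (intro rev_sort_sqrt_nth_ge) auto
qed

end
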